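(* Let $k\ge 1$ and $n\ge 1$ be integers. If the odd cycle $C_{2n+1}$ is a strict prime $k$th-power distance graph, then so is every larger odd cycle $C_{2(n+j)+1}$, $j\ge 1$.
   Context: A graph $G$ is a strict prime $k$th-power distance graph if there is an injective map $L:V(G)\to\mathbb{Z}$ such that for every edge $uv$ of $G$, $|L(u)-L(v)|=p^k$ for some prime $p$ (the prime may depend on the edge). *)

theory Defs
  imports "HOL-Computational_Algebra.Primes"
begin

definition strict_prime_power_distance_graph :: "nat \<Rightarrow> 'a set \<Rightarrow> 'a set set \<Rightarrow> bool" where
  "strict_prime_power_distance_graph k V E \<longleftrightarrow>
     (\<exists>L :: 'a \<Rightarrow> int. inj_on L V \<and>
        (\<forall>u\<in>V. \<forall>v\<in>V. {u, v} \<in> E \<longrightarrow> (\<exists>p :: nat. prime p \<and> \<bar>L u - L v\<bar> = int p ^ k)))"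

text \<open>The cycle C_m on vertices 0,...,m-1 with edges {i, i+1 mod m} (meant for m >= 3).\<close>

definition cycle_vertices :: "nat \<Rightarrow> nat set" where
  "cycle_vertices m = {0..<m}"

definition cycle_edges :: "nat \<Rightarrow> nat set set" where
  "cycle_edges m = {{i, (i + 1) mod m} | i. i < m}"

end

theory Submission
  imports Defs
begin

text \<open>Given a labelling \<open>L\<close> of the cycle \<open>C_m\<close>, pick a prime power \<open>D\<close> exceeding every difference of labels and
  replace the closing edge \<open>{m-1, 0}\<close> by the path \<open>m-1, m, m+1, 0\<close> labelled
  \<open>L(m-1), L(m-1) + D, L 0 + D, L 0\<close>: its outer edges have length \<open>D\<close> and its middle edge
  is a translate of the old closing edge, while the size of \<open>D\<close> keeps the labels distinct.
  Repeating this \<open>j\<close> times turns a labelling of \<open>C_(2n+1)\<close> into one of \<open>C_(2(n+j)+1)\<close>.\<close>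

definition prime_power_distance :: "nat \<Rightarrow> int \<Rightarrow> bool" where
  "prime_power_distance k d \<longleftrightarrow> (\<exists>p :: nat. prime p \<and> \<bar>d\<bar> = int p ^ k)"

definition cycle_labelling :: "nat \<Rightarrow> nat \<Rightarrow> (nat \<Rightarrow> int) \<Rightarrow> bool" where
  "cycle_labelling k m L \<longleftrightarrow>
     inj_on L {0..<m} \<and> (\<forall>i<m. prime_power_distance k (L i - L ((i + 1) mod m)))"

lemma prime_power_distance_uminus [simp]:
  "prime_power_distance k (- d) \<longleftrightarrow> prime_power_distance k d"
  by (simp add: prime_power_distance_def)

lemma cycle_distance_graph_iff_labelling:
  "strict_prime_power_distance_graph k (cycle_vertices m) (cycle_edges m) \<longleftrightarrow>
     (\<exists>L. cycle_labelling k m L)"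
proof
  assume "strict_prime_power_distance_graph k (cycle_vertices m) (cycle_edges m)"
  then obtain L where inj: "inj_on L {0..<m}" and edges:
    "\<And>u v. u < m \<Longrightarrow> v < m \<Longrightarrow> {u, v} \<in> cycle_edges m \<Longrightarrow>
       prime_power_distance k (L u - L v)"
    unfolding strict_prime_power_distance_graph_def cycle_vertices_def prime_power_distance_def
    by auto
  have "prime_power_distance k (L i - L ((i + 1) mod m))" if "i < m" for i
    using that by (intro edges) (auto simp: cycle_edges_def)
  with inj show "\<exists>L. cycle_labelling k m L"
    unfolding cycle_labelling_def by blast
next
  assume "\<exists>L. cycle_labelling k m L"
  then obtain L where L: "cycle_labelling k m L" ..
  have "prime_power_distance k (L u - L v)" if "{u, v} \<in> cycle_edges m" for u v
  proof -
    from that obtain i where "i < m" and "{u, v} = {i, (i + 1) mod m}"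
      by (auto simp: cycle_edges_def)
    moreover have "prime_power_distance k (L i - L ((i + 1) mod m))"
      using L \<open>i < m\<close> unfolding cycle_labelling_def by blast
    ultimately show ?thesis
      by (auto simp: doubleton_eq_iff prime_power_distance_def abs_minus_commute)
  qed
  with L show "strict_prime_power_distance_graph k (cycle_vertices m) (cycle_edges m)"
    unfolding strict_prime_power_distance_graph_def cycle_vertices_def cycle_labelling_def
      prime_power_distance_def by blast
qed

lemma exists_prime_power_distance_gt:
  assumes "k \<ge> 1"
  shows "\<exists>D. D > B \<and> prime_power_distance k D"
proof -
  obtain q :: nat where "prime q" and "q > nat B" using bigger_prime by blast
  have "int q \<le> int q ^ k"
    using \<open>k \<ge> 1\<close> prime_gt_0_nat[OF \<open>prime q\<close>] by (simp add: self_le_power)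
  with \<open>q > nat B\<close> have "int q ^ k > B" by linarith
  with \<open>prime q\<close> show ?thesis
    unfolding prime_power_distance_def by (intro exI[of _ "int q ^ k"]) auto
qed

lemma finite_labels_differences_bounded:
  fixes L :: "nat \<Rightarrow> int" and m :: nat
  obtains B where "\<And>u w. u < m \<Longrightarrow> w < m \<Longrightarrow> L u - L w < B"
proof
  define C where "C = Max (insert 0 (abs ` L ` {0..<m}))"
  have "\<bar>L v\<bar> \<le> C" if "v < m" for v
    using that unfolding C_def by (intro Max_ge) auto
  then show "L u - L w < 2 * C + 1" if "u < m" "w < m" for u w
    using that by (smt (verit))
qed

lemma cycle_labelling_subdivide_closing_edge:
  assumes L: "cycle_labelling k m L" and "m \<ge> 2"
    and D: "prime_power_distance k D"
    and close: "\<And>u w. u < m \<Longrightarrow> w < m \<Longrightarrow> L u - L w < D"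
  shows "cycle_labelling k (m + 2)
           (\<lambda>v. if v < m then L v else if v = m then L (m - 1) + D else L 0 + D)"
    (is "cycle_labelling k (m + 2) ?L'")
proof -
  have inj: "inj_on L {0..<m}"
    and old: "\<And>i. i < m \<Longrightarrow> prime_power_distance k (L i - L ((i + 1) mod m))"
    using L unfolding cycle_labelling_def by auto
  have ends_distinct: "L (m - 1) \<noteq> L 0"
    using inj_onD[OF inj, of "m - 1" 0] \<open>m \<ge> 2\<close> by auto
  have fresh: "L u \<noteq> L (m - 1) + D" "L u \<noteq> L 0 + D" if "u < m" for u
    using close[OF that, of "m - 1"] close[OF that, of 0] \<open>m \<ge> 2\<close> that by auto
  have "inj_on ?L' {0..<m + 2}"
  proof (rule inj_onI)
    fix u w assume "u \<in> {0..<m + 2}" "w \<in> {0..<m + 2}" and eq: "?L' u = ?L' w"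
    then consider "u < m" "w < m" | "u < m" "w \<ge> m" | "u \<ge> m" "w < m" | "u \<ge> m" "w \<ge> m"
      by linarith
    then show "u = w"
    proof cases
      case 1
      then show ?thesis using eq inj_onD[OF inj, of u w] by simp
    next
      case 2
      then show ?thesis using eq fresh[of u] by (auto split: if_splits)
    next
      case 3
      then show ?thesis using eq fresh[of w] by (auto split: if_splits)
    next
      case 4
      then show ?thesis using eq ends_distinct \<open>u \<in> {0..<m + 2}\<close> \<open>w \<in> {0..<m + 2}\<close>
        by (auto split: if_splits)
    qed
  qed
  moreover have "prime_power_distance k (?L' i - ?L' ((i + 1) mod (m + 2)))" if "i < m + 2" for i
  proof -
    consider "i + 1 < m" | "i + 1 = m" | "i = m" | "i = m + 1"
      using \<open>i < m + 2\<close> by linarith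
    then show ?thesis
    proof cases
      case 1
      then show ?thesis using old[of i] by simp
    next
      case 2
      then have "i = m - 1" by simp
      with \<open>m \<ge> 2\<close> show ?thesis using D by simp
    next
      case 3
      then show ?thesis using old[of "m - 1"] \<open>m \<ge> 2\<close> by simp
    next
      case 4
      then show ?thesis using D \<open>m \<ge> 2\<close> by simp
    qed
  qed
  ultimately show ?thesis
    unfolding cycle_labelling_def by blast
qed

lemma cycle_labelling_add_two:
  assumes "cycle_labelling k m L" and "m \<ge> 2" and "k \<ge> 1"
  shows "\<exists>L'. cycle_labelling k (m + 2) L'"
proof -
  obtain B where "\<And>u w. u < m \<Longrightarrow> w < m \<Longrightarrow> L u - L w < B"
    using finite_labels_differences_bounded[of m L] by blast
  moreover obtain D where "D > B" and "prime_power_distance k D"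
    using exists_prime_power_distance_gt[OF \<open>k \<ge> 1\<close>] by blast
  ultimately show ?thesis
    using cycle_labelling_subdivide_closing_edge[OF assms(1,2)] by fastforce
qed

lemma cycle_labelling_add_even:
  assumes "cycle_labelling k m L" and "m \<ge> 2" and "k \<ge> 1"
  shows "\<exists>L'. cycle_labelling k (m + 2 * j) L'"
proof (induction j)
  case 0
  then show ?case using assms(1) by auto
next
  case (Suc j)
  then obtain L' where "cycle_labelling k (m + 2 * j) L'" ..
  then show ?case
    using cycle_labelling_add_two[of k "m + 2 * j" L'] \<open>m \<ge> 2\<close> \<open>k \<ge> 1\<close> by auto
qed

theorem mainTheorem13:
  fixes k n j :: nat
  assumes "k \<ge> 1" and "n \<ge> 1" and "j \<ge> 1"
    and "strict_prime_power_distance_graph k (cycle_vertices (2*n+1)) (cycle_edges (2*n+1))"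
  shows "strict_prime_power_distance_graph k (cycle_vertices (2*(n+j)+1)) (cycle_edges (2*(n+j)+1))"
proof -
  obtain L where "cycle_labelling k (2 * n + 1) L"
    using assms(4) cycle_distance_graph_iff_labelling by blast
  then obtain L' where "cycle_labelling k (2 * n + 1 + 2 * j) L'"
    using cycle_labelling_add_even[of k "2 * n + 1" L j] \<open>n \<ge> 1\<close> \<open>k \<ge> 1\<close> by auto
  then show ?thesis
    using cycle_distance_graph_iff_labelling by (metis add.commute add_mult_distrib2 add.left_commute)
qed

end
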